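(* Let $v:\mathbb{R}\to(0,\infty)$ be decreasing on $(-\infty,0]$ and increasing on $[0,\infty)$, with $v(0)\ge1$. Then $v$ is admissible if and only if \[\sup_{t\in\mathbb{R}}\frac{v(2t)}{v(t)}<\infty.\]
   Context: A measurable function $v:\mathbb{R}\to(0,\infty)$ is called admissible if $v(s)\ge1$ for all $s\in\mathbb{R}$ and $\sup_{s,t\in\mathbb{R}}\frac{v(s+t)}{v(s)+v(t)}<\infty$. *)

theory Defs
  imports "HOL-Analysis.Analysis"
begin

definition admissible :: "(real \<Rightarrow> real) \<Rightarrow> bool" where
  "admissible v \<longleftrightarrow> v \<in> borel_measurable borel \<and> (\<forall>s. v s > 0) \<and> (\<forall>s. v s \<ge> 1) \<and>
     bdd_above {v (s + t) / (v s + v t) | s t. True}"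

end

theory Submission
  imports Defs
begin

text \<open>
  Taking \<open>s = t\<close> shows that admissibility gives the doubling bound.  Conversely, of \<open>s\<close> and
  \<open>t\<close> let \<open>s\<close> be the one of larger modulus; then \<open>s + t\<close> lies between \<open>0\<close> and \<open>2 s\<close>, so
  monotonicity on either side of \<open>0\<close> gives \<open>v (s + t) \<le> v (2 s) \<le> K v s\<close>.
\<close>

lemma bdd_above_range_divide_iff:
  fixes f g :: "'a \<Rightarrow> real"
  assumes "\<And>x. g x > 0"
  shows "bdd_above (range (\<lambda>x. f x / g x)) \<longleftrightarrow> (\<exists>K. \<forall>x. f x \<le> K * g x)"
  using assms by (auto simp: bdd_above_def pos_divide_le_eq)

lemma valley_min:
  fixes v :: "real \<Rightarrow> real"
  assumes "antimono_on {..a} v" "mono_on {a..} v"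
  shows "v a \<le> v s"
  using assms by (cases "s \<le> a") (auto simp: monotone_on_def)

lemma borel_measurable_valley:
  fixes v :: "real \<Rightarrow> real"
  assumes dec: "antimono_on {..a} v" and inc: "mono_on {a..} v"
  shows "v \<in> borel_measurable borel"
proof -
  have "mono (\<lambda>x. - v (min x a))" "mono (\<lambda>x. v (max x a))"
    using dec inc by (auto simp: mono_def monotone_on_def min_def max_def)
  then have "(\<lambda>x. v (max x a) - (- v (min x a)) - v a) \<in> borel_measurable borel"
    by (intro borel_measurable_diff borel_measurable_mono borel_measurable_const)
  moreover have "(\<lambda>x. v (max x a) - (- v (min x a)) - v a) = v"
    by (auto simp: min_def max_def)
  ultimately show ?thesis
    by simp
qed

lemma valley_le_doubling_bound:
  fixes v :: "real \<Rightarrow> real"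
  assumes dec: "antimono_on {..0} v" and inc: "mono_on {0..} v"
    and doubling: "\<And>t. v (2 * t) \<le> K * v t"
    and "\<bar>x\<bar> \<le> 2 * \<bar>u\<bar>" "0 \<le> x * u"
  shows "v x \<le> K * v u"
proof (cases "0 \<le> u")
  case True
  with assms(4,5) have "0 \<le> x" "x \<le> 2 * u"
    by (auto simp: zero_le_mult_iff)
  with inc have "v x \<le> v (2 * u)"
    by (auto simp: monotone_on_def)
  then show ?thesis
    using doubling[of u] by (rule order_trans)
next
  case False
  with assms(4,5) have "x \<le> 0" "2 * u \<le> x"
    by (auto simp: zero_le_mult_iff)
  with dec have "v x \<le> v (2 * u)"
    by (auto simp: monotone_on_def)
  then show ?thesis
    using doubling[of u] by (rule order_trans)
qed

lemma valley_add_le_doubling_bound: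
  fixes v :: "real \<Rightarrow> real"
  assumes dec: "antimono_on {..0} v" and inc: "mono_on {0..} v"
    and doubling: "\<And>t. v (2 * t) \<le> K * v t" and "0 < v 0"
  shows "v (s + t) \<le> K * max (v s) (v t)"
proof -
  have "v (s + t) \<le> K * v s \<or> v (s + t) \<le> K * v t"
  proof (cases "\<bar>t\<bar> \<le> \<bar>s\<bar>")
    case True
    then have "0 \<le> (s + t) * s"
      by (auto simp: zero_le_mult_iff)
    with True show ?thesis
      using valley_le_doubling_bound[OF dec inc doubling, of "s + t" s] by auto
  next
    case False
    then have "0 \<le> (s + t) * t"
      by (auto simp: zero_le_mult_iff)
    with False show ?thesis
      using valley_le_doubling_bound[OF dec inc doubling, of "s + t" t] by auto
  qed
  moreover have "0 \<le> K"
    using doubling[of 0] \<open>0 < v 0\<close> by (simp add: mult_le_cancel_right1)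
  ultimately show ?thesis
    by (metis max.cobounded1 max.cobounded2 mult_left_mono order_trans)
qed

lemma sum_bound_imp_doubling_bound:
  fixes v :: "real \<Rightarrow> real"
  assumes "\<And>s t. v (s + t) \<le> K * (v s + v t)"
  shows "v (2 * t) \<le> (2 * K) * v t"
  using assms[of t t] by (simp add: mult_2 algebra_simps)

lemma valley_doubling_bound_imp_sum_bound:
  fixes v :: "real \<Rightarrow> real"
  assumes dec: "antimono_on {..0} v" and inc: "mono_on {0..} v" and pos: "\<And>s. 0 < v s"
    and doubling: "\<And>t. v (2 * t) \<le> K * v t"
  shows "v (s + t) \<le> K * (v s + v t)"
proof -
  have "0 \<le> K"
    using doubling[of 0] pos[of 0] by (simp add: mult_le_cancel_right1)
  have "v (s + t) \<le> K * max (v s) (v t)"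
    using valley_add_le_doubling_bound[OF dec inc doubling pos] .
  also have "\<dots> \<le> K * (v s + v t)"
    using \<open>0 \<le> K\<close> pos[of s] pos[of t] by (intro mult_left_mono) auto
  finally show ?thesis .
qed

theorem lemma2p2:
  fixes v :: "real \<Rightarrow> real"
  assumes pos: "\<And>s. v s > 0"
    and dec: "antimono_on {..0} v"
    and inc: "mono_on {0..} v"
    and v0: "v 0 \<ge> 1"
  shows "admissible v \<longleftrightarrow> bdd_above {v (2 * t) / v t | t. True}"
proof -
  have ge1: "v s \<ge> 1" for s
    using valley_min[OF dec inc, of s] v0 by simp
  have "{v (s + t) / (v s + v t) | s t. True} = range (\<lambda>(s, t). v (s + t) / (v s + v t))"
    by auto
  then have "admissible v \<longleftrightarrow> (\<exists>K. \<forall>s t. v (s + t) \<le> K * (v s + v t))"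
    using borel_measurable_valley[OF dec inc] pos ge1
    by (simp add: admissible_def bdd_above_range_divide_iff add_pos_pos split_def)
  also have "\<dots> \<longleftrightarrow> (\<exists>K. \<forall>t. v (2 * t) \<le> K * v t)"
    using sum_bound_imp_doubling_bound valley_doubling_bound_imp_sum_bound[OF dec inc pos]
    by blast
  also have "\<dots> \<longleftrightarrow> bdd_above {v (2 * t) / v t | t. True}"
    using pos by (simp add: full_SetCompr_eq bdd_above_range_divide_iff)
  finally show ?thesis .
qed

end
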